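(* For all positive integers $d\le n$ there exists $\mathcal{A}\subset2^{[n]}$ with $\mathrm{VC}(\mathcal{A}\cap\mathcal{A})\le d$, $\mathrm{VC}(\mathcal{A}\cup\mathcal{A})\le d$ and $|\mathcal{A}|>(n/d)^d$.
   Context: $[n]=\{1,\dots,n\}$. $\mathrm{VC}(\mathcal{F})$ is the largest cardinality of a $Y\subset[n]$ with $\{S\cap Y:S\in\mathcal{F}\}=2^Y$. $\mathcal{A}\cap\mathcal{A}=\{S\cap T:S,T\in\mathcal{A}\}$ and $\mathcal{A}\cup\mathcal{A}=\{S\cup T:S,T\in\mathcal{A}\}$. *)

theory Defs
  imports Complex_Main
begin

definition shatters :: "nat set set \<Rightarrow> nat set \<Rightarrow> bool" where
  "shatters F Y \<longleftrightarrow> (\<lambda>S. S \<inter> Y) ` F = Pow Y"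

definition VC :: "nat \<Rightarrow> nat set set \<Rightarrow> nat" where
  "VC n F = Max (insert 0 {card Y | Y. Y \<subseteq> {1..n} \<and> shatters F Y})"

definition fam_inter :: "nat set set \<Rightarrow> nat set set" where
  "fam_inter A = {S \<inter> T | S T. S \<in> A \<and> T \<in> A}"

definition fam_union :: "nat set set \<Rightarrow> nat set set" where
  "fam_union A = {S \<union> T | S T. S \<in> A \<and> T \<in> A}"

end

theory Submission
  imports Defs "HOL-Library.FuncSet"
begin

text \<open>Cut {1..m*d} into d consecutive blocks of length m. If every set of a family is
down-closed inside each block, then for two points a < b of one block the singleton {b}
is never cut out, so a shattered set meets each block at most once and has at most d
elements. Down-closedness survives intersections and unions, and the sets that are an
initial segment of every block, of any of the m + 1 possible lengths, number
(m + 1)^d > (n/d)^d for m = n div d.\<close>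

definition down_closed_in_blocks :: "(nat \<Rightarrow> nat) \<Rightarrow> nat set \<Rightarrow> nat set \<Rightarrow> bool" where
  "down_closed_in_blocks f D S \<longleftrightarrow>
     S \<subseteq> D \<and> (\<forall>x\<in>D. \<forall>y\<in>S. x \<le> y \<longrightarrow> f x = f y \<longrightarrow> x \<in> S)"

lemma down_closed_in_blocks_Int:
  "down_closed_in_blocks f D S \<Longrightarrow> down_closed_in_blocks f D T
    \<Longrightarrow> down_closed_in_blocks f D (S \<inter> T)"
  unfolding down_closed_in_blocks_def by blast

lemma down_closed_in_blocks_Un:
  "down_closed_in_blocks f D S \<Longrightarrow> down_closed_in_blocks f D T
    \<Longrightarrow> down_closed_in_blocks f D (S \<union> T)"
  unfolding down_closed_in_blocks_def by blast

lemma shatters_imp_subset: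
  assumes "shatters F Y" and "\<And>S. S \<in> F \<Longrightarrow> S \<subseteq> D"
  shows "Y \<subseteq> D"
proof -
  have "Y \<in> (\<lambda>S. S \<inter> Y) ` F"
    using assms(1) unfolding shatters_def by blast
  then show ?thesis using assms(2) by blast
qed

lemma shatters_inj_on_blocks:
  assumes sh: "shatters F Y" and closed: "\<And>S. S \<in> F \<Longrightarrow> down_closed_in_blocks f D S"
  shows "inj_on f Y"
proof -
  have Y: "Y \<subseteq> D"
    using shatters_imp_subset[OF sh] closed unfolding down_closed_in_blocks_def by blast
  have False if "a \<in> Y" "b \<in> Y" "f a = f b" "a < b" for a b
  proof -
    have "{b} \<in> (\<lambda>S. S \<inter> Y) ` F"
      using sh \<open>b \<in> Y\<close> unfolding shatters_def by blast
    then obtain S where S: "S \<in> F" "S \<inter> Y = {b}" by blast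
    then have "a \<in> S"
      using closed[OF S(1)] that Y unfolding down_closed_in_blocks_def
      by (metis IntE insertI1 less_imp_le subsetD)
    then show False using S(2) that by auto
  qed
  then show ?thesis
    by (intro inj_onI) (metis linorder_neqE_nat)
qed

lemma card_shattered_le_blocks:
  assumes "shatters F Y" and "\<And>S. S \<in> F \<Longrightarrow> down_closed_in_blocks f D S"
    and "f ` D \<subseteq> {..<d}"
  shows "card Y \<le> d"
proof -
  have "Y \<subseteq> D"
    using shatters_imp_subset assms(1,2) unfolding down_closed_in_blocks_def by blast
  then have "card Y \<le> card {..<d}"
    using assms(3) by (intro card_inj_on_le[OF shatters_inj_on_blocks[OF assms(1,2)]]) auto
  then show ?thesis by simp
qed

lemma VC_le:
  assumes "\<And>Y. Y \<subseteq> {1..n} \<Longrightarrow> shatters F Y \<Longrightarrow> card Y \<le> d"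
  shows "VC n F \<le> d"
proof -
  have "{card Y | Y. Y \<subseteq> {1..n} \<and> shatters F Y} \<subseteq> card ` Pow {1..n}" by auto
  then have "finite {card Y | Y. Y \<subseteq> {1..n} \<and> shatters F Y}"
    by (rule finite_subset) simp
  then show ?thesis
    unfolding VC_def using assms by (auto intro!: Max.boundedI)
qed

abbreviation block :: "nat \<Rightarrow> nat \<Rightarrow> nat" where
  "block m x \<equiv> (x - 1) div m"

lemma block_image_subset: "block m ` {1..m * d} \<subseteq> {..<d}"
  by (cases "m = 0") (auto simp: div_less_iff_less_mult mult.commute)

lemma VC_le_if_down_closed_in_blocks:
  assumes "\<And>S. S \<in> F \<Longrightarrow> down_closed_in_blocks (block m) {1..m * d} S"
  shows "VC n F \<le> d"
  by (intro VC_le card_shattered_le_blocks[OF _ assms block_image_subset])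

definition staircase :: "nat \<Rightarrow> nat \<Rightarrow> (nat \<Rightarrow> nat) \<Rightarrow> nat set" where
  "staircase m d k = {x \<in> {1..m * d}. (x - 1) mod m < k (block m x)}"

lemma down_closed_staircase:
  "down_closed_in_blocks (block m) {1..m * d} (staircase m d k)"
proof -
  have "(x - 1) mod m \<le> (y - 1) mod m" if "x \<le> y" "block m x = block m y" for x y
    using that by (metis add_le_cancel_left div_mult_mod_eq diff_le_mono)
  then show ?thesis
    unfolding down_closed_in_blocks_def staircase_def by fastforce
qed

lemma mem_staircase_iff:
  assumes "j < d" "i < m"
  shows "j * m + i + 1 \<in> staircase m d k \<longleftrightarrow> i < k j"
proof -
  have "j * m + i + 1 \<le> (j + 1) * m" using assms(2) by simp
  also have "\<dots> \<le> m * d"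
    using assms(1) by (metis Suc_eq_plus1 Suc_leI mult.commute mult_le_mono1)
  finally show ?thesis
    using assms(2) unfolding staircase_def by simp
qed

lemma staircase_subset_imp_le:
  assumes "staircase m d k \<subseteq> staircase m d k'" "j < d" "k j \<le> m"
  shows "k j \<le> k' j"
proof (rule ccontr)
  assume "\<not> k j \<le> k' j"
  then have "k' j < m" "k' j < k j" using assms(3) by auto
  then show False
    using assms(1) mem_staircase_iff[OF assms(2), of "k' j"] by blast
qed

lemma inj_on_staircase: "inj_on (staircase m d) (PiE {..<d} (\<lambda>_. {0..m}))"
proof (rule inj_onI)
  fix k k' assume k: "k \<in> PiE {..<d} (\<lambda>_. {0..m})" "k' \<in> PiE {..<d} (\<lambda>_. {0..m})"
    and eq: "staircase m d k = staircase m d k'"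
  have "k j = k' j" if "j < d" for j
    using staircase_subset_imp_le[of m d k k' j] staircase_subset_imp_le[of m d k' k j]
      eq k that by fastforce
  then show "k = k'"
    using k by (intro PiE_ext) auto
qed

lemma divide_less_div_plus_one:
  assumes "0 < d"
  shows "real n / real d < real (n div d) + 1"
proof -
  have "n < d * (n div d) + d"
    using div_mult_mod_eq[of n d] mod_less_divisor[OF assms, of n]
    by (metis add_less_cancel_left mult.commute)
  then have "real n < real d * (real (n div d) + 1)"
    by (simp add: distrib_left flip: of_nat_mult of_nat_add)
  then show ?thesis
    using assms by (simp add: divide_less_eq mult.commute)
qed

theorem proposition11:
  fixes n d :: nat
  assumes "1 \<le> d" and "d \<le> n"
  shows "\<exists>A. A \<subseteq> Pow {1..n} \<and> VC n (fam_inter A) \<le> d \<and> VC n (fam_union A) \<le> d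
              \<and> real (card A) > (real n / real d) ^ d"
proof -
  define m where "m = n div d"
  define A where "A = staircase m d ` PiE {..<d} (\<lambda>_. {0..m})"
  have closed: "down_closed_in_blocks (block m) {1..m * d} S" if "S \<in> A" for S
    using that down_closed_staircase unfolding A_def by blast
  have "VC n (fam_inter A) \<le> d"
    using closed down_closed_in_blocks_Int unfolding fam_inter_def
    by (intro VC_le_if_down_closed_in_blocks) blast
  moreover have "VC n (fam_union A) \<le> d"
    using closed down_closed_in_blocks_Un unfolding fam_union_def
    by (intro VC_le_if_down_closed_in_blocks) blast
  moreover have "A \<subseteq> Pow {1..n}"
  proof -
    have "m * d \<le> n" unfolding m_def by (simp add: div_times_less_eq_dividend)
    then show ?thesis using closed unfolding down_closed_in_blocks_def by fastforce
  qed
  moreover have "real (card A) = (real m + 1) ^ d"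
    unfolding A_def by (simp add: card_image[OF inj_on_staircase] card_PiE add.commute)
  moreover have "(real n / real d) ^ d < (real m + 1) ^ d"
    using assms(1) divide_less_div_plus_one[of d n] unfolding m_def
    by (intro power_strict_mono) auto
  ultimately show ?thesis by (metis (no_types))
qed

end
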